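(* Let $\mu\in[0,1)$ and $\sigma>1$. For $Z\in[0,1]$ let \[ \delta(Z)=1-\frac{\mu}{\sigma}Z-\frac{\sigma-1}{\sigma}Z^2,\quad A(Z)=\frac{1}{\delta(Z)}\left[1+\frac{\mu}{\sigma-1}Z-\left(1+\frac{\mu^2}{\sigma-1}\right)Z^2\right],\quad B(Z)=-\frac{(\mu Z-1)^2}{\delta(Z)}, \] and let \[ Z^*=\frac{\mu(2\sigma-1)}{\sigma(1+\mu^2)-1}. \] Then for $Z\in(0,1]$: $A(Z)+B(Z)>0$ if $Z<Z^*$, and $A(Z)+B(Z)<0$ if $Z>Z^*$.
   Context: One has $\delta(Z)>0$ for all $Z\in[0,1]$, so $A$ and $B$ are well defined there. *)

theory Defs
  imports Complex_Main
begin

definition delta :: "real \<Rightarrow> real \<Rightarrow> real \<Rightarrow> real" where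
  "delta \<mu> \<sigma> Z = 1 - (\<mu> / \<sigma>) * Z - ((\<sigma> - 1) / \<sigma>) * Z^2"

definition A_fun :: "real \<Rightarrow> real \<Rightarrow> real \<Rightarrow> real" where
  "A_fun \<mu> \<sigma> Z = (1 / delta \<mu> \<sigma> Z) *
     (1 + (\<mu> / (\<sigma> - 1)) * Z - (1 + \<mu>^2 / (\<sigma> - 1)) * Z^2)"

definition B_fun :: "real \<Rightarrow> real \<Rightarrow> real \<Rightarrow> real" where
  "B_fun \<mu> \<sigma> Z = - ((\<mu> * Z - 1)^2 / delta \<mu> \<sigma> Z)"

definition Z_star :: "real \<Rightarrow> real \<Rightarrow> real" where
  "Z_star \<mu> \<sigma> = \<mu> * (2 * \<sigma> - 1) / (\<sigma> * (1 + \<mu>^2) - 1)"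

end

theory Submission
  imports Defs
begin

text \<open>Over the common denominator \<open>(\<sigma> - 1) \<delta>(Z)\<close> the numerator of \<open>A + B\<close> is
  \<open>Z (\<mu> (2\<sigma> - 1) - Z (\<sigma> (1 + \<mu>\<^sup>2) - 1)) = Z (\<sigma> (1 + \<mu>\<^sup>2) - 1) (Z\<^sup>* - Z)\<close>.
  For \<open>0 < Z \<le> 1\<close> the factors \<open>Z\<close>, \<open>\<sigma> (1 + \<mu>\<^sup>2) - 1\<close>, \<open>\<sigma> - 1\<close> and \<open>\<delta>(Z)\<close> are positive,
  so \<open>A + B\<close> has the sign of \<open>Z\<^sup>* - Z\<close>.\<close>

lemma delta_pos:
  fixes \<mu> \<sigma> Z :: real
  assumes "0 \<le> \<mu>" "\<mu> < 1" "1 \<le> \<sigma>" "0 \<le> Z" "Z \<le> 1"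
  shows "delta \<mu> \<sigma> Z > 0"
proof -
  have scaled: "\<sigma> * delta \<mu> \<sigma> Z = \<sigma> - \<mu> * Z - (\<sigma> - 1) * Z^2"
    using assms by (simp add: delta_def field_simps)
  have "\<mu> * Z \<le> \<mu>"
    using assms by (simp add: mult_left_le)
  moreover have "(\<sigma> - 1) * Z^2 \<le> \<sigma> - 1"
    using assms by (simp add: mult_left_le power_le_one)
  ultimately have "\<sigma> * delta \<mu> \<sigma> Z > 0"
    using scaled assms by linarith
  then show ?thesis
    using assms by (simp add: zero_less_mult_iff)
qed

lemma Z_star_denominator_pos:
  fixes \<mu> \<sigma> :: real
  assumes "1 < \<sigma>"
  shows "\<sigma> * (1 + \<mu>^2) - 1 > 0"
proof -
  have "\<sigma> * (1 + \<mu>^2) - 1 = (\<sigma> - 1) + \<sigma> * \<mu>^2"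
    by (simp add: algebra_simps)
  moreover have "\<sigma> * \<mu>^2 \<ge> 0"
    using assms by simp
  ultimately show ?thesis
    using assms by linarith
qed

lemma A_fun_plus_B_fun_numerator:
  fixes \<mu> \<sigma> Z :: real
  assumes "\<sigma> \<noteq> 1"
  shows "(\<sigma> - 1) * ((1 + (\<mu> / (\<sigma> - 1)) * Z - (1 + \<mu>^2 / (\<sigma> - 1)) * Z^2) - (\<mu> * Z - 1)^2)
       = Z * (\<mu> * (2 * \<sigma> - 1) - Z * (\<sigma> * (1 + \<mu>^2) - 1))"
proof -
  \<comment> \<open>with \<open>\<sigma> - 1\<close> abstracted to an atom, \<open>field_simps\<close> clears the denominators\<close>
  define c where "c = \<sigma> - 1"
  have "c \<noteq> 0" "\<sigma> = c + 1"
    using assms by (simp_all add: c_def)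
  then show ?thesis
    unfolding c_def[symmetric] by (simp add: field_simps power2_eq_square)
qed

lemma A_fun_plus_B_fun_eq:
  fixes \<mu> \<sigma> Z :: real
  assumes "\<sigma> \<noteq> 1" "\<sigma> * (1 + \<mu>^2) - 1 \<noteq> 0"
  shows "A_fun \<mu> \<sigma> Z + B_fun \<mu> \<sigma> Z
       = Z * (\<sigma> * (1 + \<mu>^2) - 1) * (Z_star \<mu> \<sigma> - Z) / ((\<sigma> - 1) * delta \<mu> \<sigma> Z)"
proof -
  have "\<mu> * (2 * \<sigma> - 1) - Z * (\<sigma> * (1 + \<mu>^2) - 1) = (\<sigma> * (1 + \<mu>^2) - 1) * (Z_star \<mu> \<sigma> - Z)"
    using assms(2) by (simp add: Z_star_def field_simps)
  then have numerator:
    "(1 + (\<mu> / (\<sigma> - 1)) * Z - (1 + \<mu>^2 / (\<sigma> - 1)) * Z^2) - (\<mu> * Z - 1)^2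
       = Z * (\<sigma> * (1 + \<mu>^2) - 1) * (Z_star \<mu> \<sigma> - Z) / (\<sigma> - 1)"
    using A_fun_plus_B_fun_numerator[OF assms(1), of \<mu> Z] assms(1)
    by (simp add: nonzero_eq_divide_eq mult.commute mult.left_commute)
  have "A_fun \<mu> \<sigma> Z + B_fun \<mu> \<sigma> Z
      = ((1 + (\<mu> / (\<sigma> - 1)) * Z - (1 + \<mu>^2 / (\<sigma> - 1)) * Z^2) - (\<mu> * Z - 1)^2) / delta \<mu> \<sigma> Z"
    by (simp add: A_fun_def B_fun_def diff_divide_distrib)
  also have "\<dots> = Z * (\<sigma> * (1 + \<mu>^2) - 1) * (Z_star \<mu> \<sigma> - Z) / ((\<sigma> - 1) * delta \<mu> \<sigma> Z)"
    unfolding numerator by simp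
  finally show ?thesis .
qed

theorem lemma3:
  fixes \<mu> \<sigma> Z :: real
  assumes "0 \<le> \<mu>" and "\<mu> < 1" and "\<sigma> > 1"
    and "0 < Z" and "Z \<le> 1"
  shows "(Z < Z_star \<mu> \<sigma> \<longrightarrow> A_fun \<mu> \<sigma> Z + B_fun \<mu> \<sigma> Z > 0)
       \<and> (Z > Z_star \<mu> \<sigma> \<longrightarrow> A_fun \<mu> \<sigma> Z + B_fun \<mu> \<sigma> Z < 0)"
proof -
  define k where "k = Z * (\<sigma> * (1 + \<mu>^2) - 1) / ((\<sigma> - 1) * delta \<mu> \<sigma> Z)"
  have "k > 0"
    unfolding k_def using assms delta_pos[of \<mu> \<sigma> Z] Z_star_denominator_pos[of \<sigma> \<mu>] by simp
  moreover have "A_fun \<mu> \<sigma> Z + B_fun \<mu> \<sigma> Z = k * (Z_star \<mu> \<sigma> - Z)"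
    unfolding k_def using assms Z_star_denominator_pos[of \<sigma> \<mu>] by (simp add: A_fun_plus_B_fun_eq)
  ultimately show ?thesis
    by (simp add: mult_pos_neg)
qed

end
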